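(* Let $4\le k\le n-1$ and let $\mathcal X$ be an $n$-independent set of $d(n,k-3)+3$ nodes such that there are seven linearly independent polynomials in $\Pi_k$ vanishing on $\mathcal X$. Then there are three linearly independent polynomials in $\Pi_{k-1}$ vanishing at all nodes of $\mathcal X$.
   Context: $\Pi_m$ denotes the space of real bivariate polynomials of total degree at most $m$; $N_m=\frac12(m+1)(m+2)$ and $d(n,k):=N_n-N_{n-k}=\frac12 k(2n+3-k)$. For a finite node set $\mathcal X$ and $A\in\mathcal X$, $p\in\Pi_n$ is an $n$-fundamental polynomial of $A$ if $p(A)=1$ and $p$ vanishes on $\mathcal X\setminus\{A\}$; $\mathcal X$ is $n$-independent if every node has an $n$-fundamental polynomial. *)

theory Defs
  imports Complex_Main
begin

definition Pi_deg :: "nat \<Rightarrow> (real \<times> real \<Rightarrow> real) set" where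
  "Pi_deg m = {p. \<exists>c :: nat \<Rightarrow> nat \<Rightarrow> real.
      p = (\<lambda>(x, y). \<Sum>(i, j) \<in> {(i, j). i + j \<le> m}. c i j * x ^ i * y ^ j)}"

definition N_dim :: "nat \<Rightarrow> nat" where
  "N_dim m = (m + 1) * (m + 2) div 2"

definition d_fun :: "nat \<Rightarrow> nat \<Rightarrow> nat" where
  "d_fun n k = N_dim n - N_dim (n - k)"

definition fundamental_poly :: "nat \<Rightarrow> (real \<times> real) set \<Rightarrow> real \<times> real \<Rightarrow> (real \<times> real \<Rightarrow> real) \<Rightarrow> bool" where
  "fundamental_poly n X A p \<longleftrightarrow> p \<in> Pi_deg n \<and> p A = 1 \<and> (\<forall>B \<in> X - {A}. p B = 0)"

definition n_independent :: "nat \<Rightarrow> (real \<times> real) set \<Rightarrow> bool" where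
  "n_independent n X \<longleftrightarrow> (\<forall>A \<in> X. \<exists>p. fundamental_poly n X A p)"

definition lin_indep_fam :: "nat \<Rightarrow> (nat \<Rightarrow> real \<times> real \<Rightarrow> real) \<Rightarrow> bool" where
  "lin_indep_fam r P \<longleftrightarrow>
     (\<forall>a :: nat \<Rightarrow> real. (\<forall>z. (\<Sum>i<r. a i * P i z) = 0) \<longrightarrow> (\<forall>i<r. a i = 0))"

definition has_indep_vanishing :: "nat \<Rightarrow> nat \<Rightarrow> (real \<times> real) set \<Rightarrow> bool" where
  "has_indep_vanishing r m X \<longleftrightarrow>
     (\<exists>P. (\<forall>i<r. P i \<in> Pi_deg m \<and> (\<forall>B \<in> X. P i B = 0)) \<and> lin_indep_fam r P)"

end

(*
  Polynomials are represented by coefficient vectors, and monomials are compared in the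
  graded lexicographic order. The polynomials of Pi_k vanishing on X have at least seven
  distinct leading monomials. If three of them have degree below k, the corresponding
  polynomials lie in Pi_(k-1) and are independent. Otherwise at least five have degree
  exactly k; multiplying the corresponding polynomials by all monomials of degree at most
  m = n - k produces, in every degree k + j, at least five plus j distinct leading monomials
  of polynomials of Pi_n vanishing on X. Since X is n-independent, polynomials of Pi_n
  vanishing on X have at most N_n - |X| = N_(m+3) - 3 distinct leading monomials, which
  is too few.
*)
theory Submission
  imports Defs "HOL-Library.Product_Lexorder" "HOL-Library.Product_Plus"
begin

section \<open>Polynomials as coefficient vectors\<close>

definition mono_deg :: "nat \<times> nat \<Rightarrow> nat" where
  "mono_deg \<mu> = fst \<mu> + snd \<mu>"

definition monomials :: "nat \<Rightarrow> (nat \<times> nat) set" where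
  "monomials N = {\<mu>. mono_deg \<mu> \<le> N}"

definition coeff_space :: "nat \<Rightarrow> (nat \<times> nat \<Rightarrow> real) set" where
  "coeff_space N = {c. \<forall>\<mu>. \<mu> \<notin> monomials N \<longrightarrow> c \<mu> = 0}"

definition poly_eval :: "nat \<Rightarrow> (nat \<times> nat \<Rightarrow> real) \<Rightarrow> real \<times> real \<Rightarrow> real" where
  "poly_eval N c = (\<lambda>(x, y). \<Sum>\<mu>\<in>monomials N. c \<mu> * x ^ fst \<mu> * y ^ snd \<mu>)"

lemma coeff_spaceD: "c \<in> coeff_space N \<Longrightarrow> \<mu> \<notin> monomials N \<Longrightarrow> c \<mu> = 0"
  unfolding coeff_space_def by blast

lemma coeff_space_nonzero: "c \<in> coeff_space N \<Longrightarrow> c \<mu> \<noteq> 0 \<Longrightarrow> \<mu> \<in> monomials N"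
  unfolding coeff_space_def by blast

lemma finite_monomials [simp]: "finite (monomials N)"
proof -
  have "monomials N \<subseteq> {..N} \<times> {..N}"
    by (auto simp: monomials_def mono_deg_def)
  then show ?thesis
    by (rule finite_subset) simp
qed

lemma card_monomials: "card (monomials N) = N_dim N"
proof (induction N)
  case 0
  have "monomials 0 = {(0, 0)}"
    by (auto simp: monomials_def mono_deg_def)
  then show ?case
    by (simp add: N_dim_def)
next
  case (Suc N)
  define top where "top = (\<lambda>i. (i, Suc N - i)) ` {..Suc N}"
  have "monomials (Suc N) = monomials N \<union> top"
    by (auto simp: monomials_def mono_deg_def top_def image_iff)
  moreover have "monomials N \<inter> top = {}"
    by (auto simp: monomials_def mono_deg_def top_def)
  moreover have "card top = Suc (Suc N)"
    unfolding top_def by (subst card_image) (auto simp: inj_on_def)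
  moreover have "N_dim (Suc N) = N_dim N + Suc (Suc N)"
    by (simp add: N_dim_def)
  ultimately show ?case
    using Suc by (simp add: card_Un_disjoint top_def)
qed

lemma coeff_space_mono: "N \<le> M \<Longrightarrow> coeff_space N \<subseteq> coeff_space M"
  by (auto simp: coeff_space_def monomials_def)

lemma Pi_deg_iff_poly_eval: "p \<in> Pi_deg N \<longleftrightarrow> (\<exists>c\<in>coeff_space N. p = poly_eval N c)"
proof
  assume "p \<in> Pi_deg N"
  then obtain c where p: "p = (\<lambda>(x, y). \<Sum>(i, j)\<in>{(i, j). i + j \<le> N}. c i j * x ^ i * y ^ j)"
    by (auto simp: Pi_deg_def)
  let ?c = "\<lambda>\<mu>. if \<mu> \<in> monomials N then case_prod c \<mu> else 0"
  have "p = poly_eval N ?c"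
    by (auto simp: p poly_eval_def monomials_def mono_deg_def split_def fun_eq_iff
        intro!: sum.cong)
  moreover have "?c \<in> coeff_space N"
    by (simp add: coeff_space_def)
  ultimately show "\<exists>c\<in>coeff_space N. p = poly_eval N c"
    by blast
next
  assume "\<exists>c\<in>coeff_space N. p = poly_eval N c"
  then obtain c where "p = poly_eval N c"
    by blast
  then show "p \<in> Pi_deg N"
    unfolding Pi_deg_def
    by (intro CollectI exI[of _ "\<lambda>i j. c (i, j)"])
      (auto simp: poly_eval_def monomials_def mono_deg_def split_def fun_eq_iff)
qed

lemma poly_eval_mono:
  assumes "c \<in> coeff_space N" and "N \<le> M"
  shows "poly_eval M c = poly_eval N c"
proof
  fix z :: "real \<times> real"
  have "monomials N \<subseteq> monomials M"
    using assms(2) by (auto simp: monomials_def)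
  then show "poly_eval M c z = poly_eval N c z"
    using assms(1) unfolding poly_eval_def
    by (cases z) (auto intro!: sum.mono_neutral_right simp: coeff_space_def)
qed

lemma poly_eval_lincomb:
  "poly_eval N (\<lambda>\<mu>. \<Sum>i\<in>F. a i * c i \<mu>) z = (\<Sum>i\<in>F. a i * poly_eval N (c i) z)"
  by (cases z) (simp add: poly_eval_def sum_distrib_left sum_distrib_right mult.assoc sum.swap[of _ F])

lemma lincomb_coeff_space:
  "(\<And>i. i \<in> F \<Longrightarrow> c i \<in> coeff_space N) \<Longrightarrow> (\<lambda>\<mu>. \<Sum>i\<in>F. a i * c i \<mu>) \<in> coeff_space N"
  by (simp add: coeff_space_def)

lemma coeff_space_eq_0_if_poly_eval_eq_0:
  assumes c: "c \<in> coeff_space N" and zero: "\<And>z. poly_eval N c z = 0"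
  shows "c \<mu> = 0"
proof -
  have rows: "poly_eval N c (x, y) = (\<Sum>i\<le>N. (\<Sum>j\<le>N. c (i, j) * y ^ j) * x ^ i)" for x y
  proof -
    have "poly_eval N c (x, y) = (\<Sum>\<mu>\<in>{..N} \<times> {..N}. c \<mu> * x ^ fst \<mu> * y ^ snd \<mu>)"
      unfolding poly_eval_def split_conv using c
      by (intro sum.mono_neutral_left) (auto simp: monomials_def mono_deg_def coeff_space_def)
    also have "\<dots> = (\<Sum>i\<le>N. \<Sum>j\<le>N. c (i, j) * x ^ i * y ^ j)"
      by (simp add: sum.cartesian_product split_def)
    also have "\<dots> = (\<Sum>i\<le>N. (\<Sum>j\<le>N. c (i, j) * y ^ j) * x ^ i)"
      by (simp add: sum_distrib_left sum_distrib_right mult_ac)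
    finally show ?thesis .
  qed
  have "(\<Sum>j\<le>N. c (i, j) * y ^ j) = 0" if "i \<le> N" for i y
    using polyfun_eq_0[where n = N and c = "\<lambda>i. \<Sum>j\<le>N. c (i, j) * y ^ j"] zero rows that by simp
  then have "c (i, j) = 0" if "i \<le> N" "j \<le> N" for i j
    using polyfun_eq_0[where n = N and c = "\<lambda>j. c (i, j)"] that by simp
  moreover have "c \<mu> = 0" if "\<mu> \<notin> monomials N"
    using c that by (rule coeff_spaceD)
  ultimately show ?thesis
    by (cases \<mu>) (fastforce simp: monomials_def mono_deg_def)
qed

lemma nontrivial_relation_if_card_less:
  fixes v :: "'i \<Rightarrow> 'z \<Rightarrow> real"
  assumes "finite Z" and "finite F" and "card Z < card F"
  shows "\<exists>a. (\<exists>i\<in>F. a i \<noteq> 0) \<and> (\<forall>z\<in>Z. (\<Sum>i\<in>F. a i * v i z) = 0)"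
  using assms
proof (induction Z arbitrary: F v rule: finite_induct)
  case empty
  then obtain i where "i \<in> F"
    by fastforce
  then show ?case
    by (intro exI[of _ "\<lambda>_. 1"]) auto
next
  case (insert z Z)
  show ?case
  proof (cases "\<forall>i\<in>F. v i z = 0")
    case True
    with insert show ?thesis
      by fastforce
  next
    case False
    then obtain i0 where i0: "i0 \<in> F" "v i0 z \<noteq> 0"
      by auto
    \<comment> \<open>Gaussian elimination: clear coordinate z using the vector i0, then recurse.\<close>
    define v' where "v' i y = v i y - v i z / v i0 z * v i0 y" for i y
    have "card Z < card (F - {i0})"
      using insert.prems insert.hyps i0 by (simp add: card_Diff_singleton)
    then obtain a' where a': "\<exists>i\<in>F - {i0}. a' i \<noteq> 0"
      "\<forall>y\<in>Z. (\<Sum>i\<in>F - {i0}. a' i * v' i y) = 0"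
      using insert.IH[of "F - {i0}" v'] insert.prems(1) by auto
    define a where
      "a i = (if i = i0 then - (\<Sum>j\<in>F - {i0}. a' j * v j z) / v i0 z else a' i)" for i
    have eq: "(\<Sum>i\<in>F. a i * v i y) = (\<Sum>i\<in>F - {i0}. a' i * v' i y)" for y
    proof -
      have "(\<Sum>i\<in>F. a i * v i y) = a i0 * v i0 y + (\<Sum>i\<in>F - {i0}. a' i * v i y)"
        using i0 insert.prems(1) by (simp add: sum.remove a_def)
      also have "(\<Sum>i\<in>F - {i0}. a' i * v' i y) = (\<Sum>i\<in>F - {i0}. a' i * v i y)
          - (\<Sum>i\<in>F - {i0}. a' i * v i z) / v i0 z * v i0 y"
        by (simp add: v'_def algebra_simps sum_subtractf sum_distrib_left
            sum_divide_distrib sum_distrib_right)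
      ultimately show ?thesis
        by (simp add: a_def)
    qed
    show ?thesis
    proof (intro exI[of _ a] conjI)
      show "\<exists>i\<in>F. a i \<noteq> 0"
        using a' by (auto simp: a_def)
      show "\<forall>y\<in>insert z Z. (\<Sum>i\<in>F. a i * v i y) = 0"
        using a' i0 by (auto simp: eq v'_def)
    qed
  qed
qed

section \<open>Leading monomials\<close>

definition grlex_key :: "nat \<times> nat \<Rightarrow> nat \<times> nat" where
  "grlex_key \<mu> = (mono_deg \<mu>, fst \<mu>)"

lemma grlex_key_inj: "grlex_key \<mu> = grlex_key \<nu> \<Longrightarrow> \<mu> = \<nu>"
  by (cases \<mu>; cases \<nu>) (auto simp: grlex_key_def mono_deg_def)

lemma grlex_key_less_if_mono_deg_less: "mono_deg \<mu> < mono_deg \<nu> \<Longrightarrow> grlex_key \<mu> < grlex_key \<nu>"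
  by (simp add: grlex_key_def less_prod_def')

lemma grlex_key_add_less_iff: "grlex_key (\<mu> + \<delta>) < grlex_key (\<nu> + \<delta>) \<longleftrightarrow> grlex_key \<mu> < grlex_key \<nu>"
  by (auto simp: grlex_key_def mono_deg_def less_prod_def')

definition is_leading_mono :: "(nat \<times> nat \<Rightarrow> real) \<Rightarrow> nat \<times> nat \<Rightarrow> bool" where
  "is_leading_mono c \<nu> \<longleftrightarrow> c \<nu> \<noteq> 0 \<and> (\<forall>\<mu>. grlex_key \<nu> < grlex_key \<mu> \<longrightarrow> c \<mu> = 0)"

lemma obtain_max_image:
  fixes f :: "'a \<Rightarrow> 'b::linorder"
  assumes "finite S" and "x \<in> S"
  obtains m where "m \<in> S" and "\<And>y. y \<in> S \<Longrightarrow> f y \<le> f m"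
proof -
  have "Max (f ` S) \<in> f ` S"
    using assms by (intro Max_in) auto
  then obtain m where "m \<in> S" "f m = Max (f ` S)"
    by (metis imageE)
  with assms that show ?thesis
    by simp
qed

lemma exists_leading_mono:
  assumes "c \<in> coeff_space N" and "c \<mu> \<noteq> 0"
  obtains \<nu> where "is_leading_mono c \<nu>"
proof -
  define S where "S = {\<mu>\<in>monomials N. c \<mu> \<noteq> 0}"
  have "finite S" "\<mu> \<in> S"
    using assms coeff_space_nonzero by (auto simp: S_def)
  then obtain \<nu> where \<nu>: "\<nu> \<in> S" "\<And>\<mu>'. \<mu>' \<in> S \<Longrightarrow> grlex_key \<mu>' \<le> grlex_key \<nu>"
    by (rule obtain_max_image[where f = grlex_key]) blast
  have "c \<mu>' = 0" if "grlex_key \<nu> < grlex_key \<mu>'" for \<mu>'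
    using that assms(1) \<nu>(2)[of \<mu>'] coeff_space_nonzero by (fastforce simp: S_def)
  with \<nu>(1) show ?thesis
    using that unfolding is_leading_mono_def S_def by blast
qed

lemma leading_mono_coeff_space:
  assumes "is_leading_mono c \<nu>"
  shows "c \<in> coeff_space (mono_deg \<nu>)"
  using assms grlex_key_less_if_mono_deg_less[of \<nu>]
  by (fastforce simp: is_leading_mono_def coeff_space_def monomials_def not_le)

lemma leading_monos_independent:
  assumes "finite I" and "inj_on \<nu> I" and lead: "\<And>i. i \<in> I \<Longrightarrow> is_leading_mono (c i) (\<nu> i)"
    and rel: "\<And>\<mu>. (\<Sum>i\<in>I. u i * c i \<mu>) = 0"
  shows "\<forall>i\<in>I. u i = 0"
proof (rule ccontr)
  assume "\<not> (\<forall>i\<in>I. u i = 0)"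
  have "finite {i\<in>I. u i \<noteq> 0}"
    using assms(1) by simp
  moreover obtain i where "i \<in> {i\<in>I. u i \<noteq> 0}"
    using \<open>\<not> (\<forall>i\<in>I. u i = 0)\<close> by blast
  ultimately obtain i0 where "i0 \<in> {i\<in>I. u i \<noteq> 0}"
    and max: "\<And>i. i \<in> {i\<in>I. u i \<noteq> 0} \<Longrightarrow> grlex_key (\<nu> i) \<le> grlex_key (\<nu> i0)"
    by (rule obtain_max_image[where f = "\<lambda>i. grlex_key (\<nu> i)"]) blast
  then have i0: "i0 \<in> I" "u i0 \<noteq> 0"
    by auto
  \<comment> \<open>At the largest leading monomial only the term of i0 survives.\<close>
  have "u i * c i (\<nu> i0) = 0" if "i \<in> I - {i0}" for i
  proof (cases "u i = 0")
    case False
    with that have "grlex_key (\<nu> i) \<le> grlex_key (\<nu> i0)"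
      using max by blast
    moreover have "\<nu> i \<noteq> \<nu> i0"
      using that assms(2) i0(1) by (auto dest: inj_onD)
    ultimately have "grlex_key (\<nu> i) < grlex_key (\<nu> i0)"
      using grlex_key_inj order_le_neq_trans by metis
    then have "c i (\<nu> i0) = 0"
      using lead[of i] that unfolding is_leading_mono_def by blast
    then show ?thesis
      by simp
  qed simp
  then have "(\<Sum>i\<in>I. u i * c i (\<nu> i0)) = u i0 * c i0 (\<nu> i0)"
    using i0(1) assms(1) by (simp add: sum.remove sum.neutral)
  then show False
    using rel i0 lead[of i0] by (simp add: is_leading_mono_def)
qed

definition shift_coeffs :: "nat \<times> nat \<Rightarrow> (nat \<times> nat \<Rightarrow> real) \<Rightarrow> nat \<times> nat \<Rightarrow> real" where
  "shift_coeffs \<delta> c \<mu> = (if fst \<delta> \<le> fst \<mu> \<and> snd \<delta> \<le> snd \<mu> then c (\<mu> - \<delta>) else 0)"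

lemma shift_coeffs_add [simp]: "shift_coeffs \<delta> c (\<mu> + \<delta>) = c \<mu>"
  by (cases \<mu>; cases \<delta>) (simp add: shift_coeffs_def)

lemma shift_coeffs_cases:
  obtains \<mu>' where "\<mu> = \<mu>' + \<delta>" | "shift_coeffs \<delta> c \<mu> = 0"
proof (cases "fst \<delta> \<le> fst \<mu> \<and> snd \<delta> \<le> snd \<mu>")
  case True
  then have "\<mu> = (\<mu> - \<delta>) + \<delta>"
    by (cases \<mu>; cases \<delta>) simp
  then show ?thesis
    using that(1) by blast
qed (auto simp: shift_coeffs_def intro!: that(2))

lemma is_leading_mono_shift: "is_leading_mono c \<nu> \<Longrightarrow> is_leading_mono (shift_coeffs \<delta> c) (\<nu> + \<delta>)"
  unfolding is_leading_mono_def
  by (metis grlex_key_add_less_iff shift_coeffs_add shift_coeffs_cases)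

lemma shift_coeff_space:
  assumes "c \<in> coeff_space k" and "\<delta> \<in> monomials m"
  shows "shift_coeffs \<delta> c \<in> coeff_space (k + m)"
  unfolding coeff_space_def
proof (intro CollectI allI impI)
  fix \<mu> assume \<mu>: "\<mu> \<notin> monomials (k + m)"
  show "shift_coeffs \<delta> c \<mu> = 0"
  proof (cases rule: shift_coeffs_cases[where \<mu> = \<mu> and \<delta> = \<delta> and c = c])
    case (1 \<mu>')
    with \<mu> assms(2) have "\<mu>' \<notin> monomials k"
      by (auto simp: monomials_def mono_deg_def)
    with 1 assms(1) show ?thesis
      by (simp add: coeff_spaceD)
  qed simp
qed

lemma poly_eval_shift:
  assumes "c \<in> coeff_space k" and "\<delta> \<in> monomials m"
  shows "poly_eval (k + m) (shift_coeffs \<delta> c) (x, y) = poly_eval k c (x, y) * x ^ fst \<delta> * y ^ snd \<delta>"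
proof -
  let ?t = "\<lambda>\<mu>. shift_coeffs \<delta> c \<mu> * x ^ fst \<mu> * y ^ snd \<mu>"
  have "poly_eval (k + m) (shift_coeffs \<delta> c) (x, y) = (\<Sum>\<mu>\<in>(\<lambda>\<mu>. \<mu> + \<delta>) ` monomials k. ?t \<mu>)"
    unfolding poly_eval_def split_conv
  proof (rule sum.mono_neutral_right)
    show "(\<lambda>\<mu>. \<mu> + \<delta>) ` monomials k \<subseteq> monomials (k + m)"
      using assms(2) by (auto simp: monomials_def mono_deg_def)
    show "\<forall>\<mu>\<in>monomials (k + m) - (\<lambda>\<mu>. \<mu> + \<delta>) ` monomials k. ?t \<mu> = 0"
    proof
      fix \<mu> assume \<mu>: "\<mu> \<in> monomials (k + m) - (\<lambda>\<mu>. \<mu> + \<delta>) ` monomials k"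
      show "?t \<mu> = 0"
      proof (cases rule: shift_coeffs_cases[where \<mu> = \<mu> and \<delta> = \<delta> and c = c])
        case (1 \<mu>')
        with \<mu> have "\<mu>' \<notin> monomials k"
          by blast
        with 1 assms(1) show ?thesis
          by (simp add: coeff_spaceD)
      qed simp
    qed
  qed simp
  also have "\<dots> = (\<Sum>\<mu>\<in>monomials k. c \<mu> * x ^ fst \<mu> * y ^ snd \<mu> * (x ^ fst \<delta> * y ^ snd \<delta>))"
    by (subst sum.reindex) (auto simp: inj_on_def power_add mult_ac)
  also have "\<dots> = poly_eval k c (x, y) * x ^ fst \<delta> * y ^ snd \<delta>"
    by (simp add: poly_eval_def sum_distrib_right mult.assoc)
  finally show ?thesis .
qed

section \<open>Polynomials vanishing on the nodes\<close>

definition vanishing_coeffs :: "nat \<Rightarrow> (real \<times> real) set \<Rightarrow> (nat \<times> nat \<Rightarrow> real) set" where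
  "vanishing_coeffs N X = {c \<in> coeff_space N. \<forall>B\<in>X. poly_eval N c B = 0}"

definition leading_monos :: "(nat \<times> nat \<Rightarrow> real) set \<Rightarrow> (nat \<times> nat) set" where
  "leading_monos V = {\<nu>. \<exists>c\<in>V. is_leading_mono c \<nu>}"

lemma leading_monos_vanishing_subset: "leading_monos (vanishing_coeffs N X) \<subseteq> monomials N"
  by (auto simp: leading_monos_def vanishing_coeffs_def is_leading_mono_def
      intro: coeff_space_nonzero)

lemma finite_leading_monos_vanishing [simp]: "finite (leading_monos (vanishing_coeffs N X))"
  using leading_monos_vanishing_subset by (rule finite_subset) simp

lemma lincomb_vanishing_coeffs:
  assumes "\<And>i. i \<in> F \<Longrightarrow> c i \<in> vanishing_coeffs N X"
  shows "(\<lambda>\<mu>. \<Sum>i\<in>F. a i * c i \<mu>) \<in> vanishing_coeffs N X"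
  using assms by (simp add: vanishing_coeffs_def lincomb_coeff_space poly_eval_lincomb)

lemma leading_monos_vanishing_shift:
  assumes "\<nu> \<in> leading_monos (vanishing_coeffs k X)" and "\<delta> \<in> monomials m"
  shows "\<nu> + \<delta> \<in> leading_monos (vanishing_coeffs (k + m) X)"
proof -
  obtain c where c: "c \<in> coeff_space k" "\<forall>B\<in>X. poly_eval k c B = 0" "is_leading_mono c \<nu>"
    using assms(1) by (auto simp: leading_monos_def vanishing_coeffs_def)
  have "shift_coeffs \<delta> c \<in> vanishing_coeffs (k + m) X"
    using c assms(2) by (auto simp: vanishing_coeffs_def shift_coeff_space poly_eval_shift)
  with c(3) show ?thesis
    unfolding leading_monos_def by (blast intro: is_leading_mono_shift)
qed

lemma card_leading_monos_vanishing_ge: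
  assumes "has_indep_vanishing r N X"
  shows "r \<le> card (leading_monos (vanishing_coeffs N X))"
proof (rule ccontr)
  let ?L = "leading_monos (vanishing_coeffs N X)"
  obtain P where P: "\<And>i. i < r \<Longrightarrow> P i \<in> Pi_deg N \<and> (\<forall>B\<in>X. P i B = 0)"
    and indep: "lin_indep_fam r P"
    using assms by (auto simp: has_indep_vanishing_def)
  have "\<exists>c. c \<in> coeff_space N \<and> P i = poly_eval N c" if "i < r" for i
    using P[OF that] by (auto simp: Pi_deg_iff_poly_eval)
  then obtain c where c: "\<And>i. i < r \<Longrightarrow> c i \<in> coeff_space N \<and> P i = poly_eval N (c i)"
    by metis
  have c_vanishing: "c i \<in> vanishing_coeffs N X" if "i < r" for i
    using P[OF that] c[OF that] by (simp add: vanishing_coeffs_def)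
  assume "\<not> r \<le> card ?L"
  then obtain a where a: "\<exists>i\<in>{..<r}. a i \<noteq> 0" "\<forall>\<mu>\<in>?L. (\<Sum>i<r. a i * c i \<mu>) = 0"
    using nontrivial_relation_if_card_less[of ?L "{..<r}" c] by auto
  define C where "C \<mu> = (\<Sum>i<r. a i * c i \<mu>)" for \<mu>
  have C: "C \<in> vanishing_coeffs N X"
    unfolding C_def by (rule lincomb_vanishing_coeffs) (simp add: c_vanishing)
  \<comment> \<open>C vanishes at all its potential leading monomials, so it is zero.\<close>
  have C_zero: "C \<mu> = 0" for \<mu>
  proof (rule ccontr)
    assume "C \<mu> \<noteq> 0"
    then obtain \<nu> where \<nu>: "is_leading_mono C \<nu>"
      using C by (auto simp: vanishing_coeffs_def elim: exists_leading_mono)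
    with C have "\<nu> \<in> ?L"
      by (auto simp: leading_monos_def)
    with a(2) \<nu> show False
      by (simp add: C_def is_leading_mono_def)
  qed
  have "(\<Sum>i<r. a i * P i z) = 0" for z
  proof -
    have "(\<Sum>i<r. a i * P i z) = (\<Sum>i<r. a i * poly_eval N (c i) z)"
      using c by simp
    also have "\<dots> = poly_eval N C z"
      unfolding C_def by (rule poly_eval_lincomb[symmetric])
    also have "\<dots> = 0"
      using C_zero by (cases z) (simp add: poly_eval_def)
    finally show ?thesis .
  qed
  with indep a(1) show False
    by (auto simp: lin_indep_fam_def)
qed

lemma has_indep_vanishing_if_low_leading_monos:
  assumes S: "finite S" "S \<subseteq> leading_monos (vanishing_coeffs N X)"
    and low: "\<And>\<nu>. \<nu> \<in> S \<Longrightarrow> mono_deg \<nu> \<le> M" and "r \<le> card S"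
  shows "has_indep_vanishing r M X"
proof -
  obtain e where e: "e ` {..<r} \<subseteq> S" "inj_on e {..<r}"
    using card_le_inj[of "{..<r}" S] S(1) assms(4) by auto
  have "\<exists>c. c \<in> vanishing_coeffs N X \<and> is_leading_mono c \<nu>" if "\<nu> \<in> S" for \<nu>
    using S(2) that by (auto simp: leading_monos_def)
  then obtain c where c: "\<And>\<nu>. \<nu> \<in> S \<Longrightarrow> c \<nu> \<in> vanishing_coeffs N X \<and> is_leading_mono (c \<nu>) \<nu>"
    by metis
  have c_M: "c \<nu> \<in> coeff_space M" and eval_M: "poly_eval M (c \<nu>) = poly_eval N (c \<nu>)"
    if "\<nu> \<in> S" for \<nu>
  proof -
    have c_deg: "c \<nu> \<in> coeff_space (mono_deg \<nu>)"
      using c[OF that] by (simp add: leading_mono_coeff_space)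
    have "\<nu> \<in> monomials N"
      using S(2) leading_monos_vanishing_subset that by blast
    then have "mono_deg \<nu> \<le> N"
      by (simp add: monomials_def)
    show "c \<nu> \<in> coeff_space M"
      using c_deg coeff_space_mono[OF low[OF that]] by blast
    have "poly_eval M (c \<nu>) = poly_eval (mono_deg \<nu>) (c \<nu>)"
      using c_deg low[OF that] by (rule poly_eval_mono)
    also have "\<dots> = poly_eval N (c \<nu>)"
      using c_deg \<open>mono_deg \<nu> \<le> N\<close> by (rule poly_eval_mono[symmetric])
    finally show "poly_eval M (c \<nu>) = poly_eval N (c \<nu>)" .
  qed
  define P where "P i = poly_eval M (c (e i))" for i
  have "lin_indep_fam r P"
    unfolding lin_indep_fam_def
  proof (rule allI, rule impI)
    fix b :: "nat \<Rightarrow> real"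
    assume rel: "\<forall>z. (\<Sum>i<r. b i * P i z) = 0"
    have "(\<lambda>\<mu>. \<Sum>i<r. b i * c (e i) \<mu>) \<in> coeff_space M"
      using e(1) by (intro lincomb_coeff_space c_M) auto
    moreover have "poly_eval M (\<lambda>\<mu>. \<Sum>i<r. b i * c (e i) \<mu>) z = 0" for z
      using rel[rule_format, of z] by (simp add: P_def poly_eval_lincomb)
    ultimately have "(\<Sum>i<r. b i * c (e i) \<mu>) = 0" for \<mu>
      by (rule coeff_space_eq_0_if_poly_eval_eq_0)
    moreover have "is_leading_mono (c (e i)) (e i)" if "i \<in> {..<r}" for i
      using c e(1) that by blast
    ultimately show "\<forall>i<r. b i = 0"
      using leading_monos_independent[OF finite_lessThan e(2), of "\<lambda>i. c (e i)" b] by blast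
  qed
  moreover have "P i \<in> Pi_deg M \<and> (\<forall>B\<in>X. P i B = 0)" if "i < r" for i
  proof -
    have "e i \<in> S"
      using e(1) that by blast
    then show ?thesis
      using c[OF \<open>e i \<in> S\<close>] c_M[OF \<open>e i \<in> S\<close>] eval_M[OF \<open>e i \<in> S\<close>]
      unfolding P_def Pi_deg_iff_poly_eval vanishing_coeffs_def by (auto intro!: bexI[where x = "c (e i)"])
  qed
  ultimately show ?thesis
    unfolding has_indep_vanishing_def by blast
qed

lemma card_leading_monos_vanishing_le:
  assumes "finite X" and "n_independent n X"
  shows "card X + card (leading_monos (vanishing_coeffs n X)) \<le> N_dim n"
proof (rule ccontr)
  define U where "U = leading_monos (vanishing_coeffs n X)"
  have finU: "finite U"
    by (simp add: U_def)
  then have fin: "finite (X <+> U)"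
    using assms(1) by simp
  have "\<exists>f. f \<in> coeff_space n \<and> poly_eval n f A = 1 \<and> (\<forall>B\<in>X - {A}. poly_eval n f B = 0)"
    if A: "A \<in> X" for A
  proof -
    obtain p where "fundamental_poly n X A p"
      using assms(2) A by (auto simp: n_independent_def)
    then show ?thesis
      unfolding fundamental_poly_def Pi_deg_iff_poly_eval by auto
  qed
  then obtain f where f: "\<And>A. A \<in> X \<Longrightarrow>
      f A \<in> coeff_space n \<and> poly_eval n (f A) A = 1 \<and> (\<forall>B\<in>X - {A}. poly_eval n (f A) B = 0)"
    by metis
  have "\<exists>g. g \<in> vanishing_coeffs n X \<and> is_leading_mono g \<nu>" if "\<nu> \<in> U" for \<nu>
    using that by (auto simp: U_def leading_monos_def)
  then obtain g where g: "\<And>\<nu>. \<nu> \<in> U \<Longrightarrow> g \<nu> \<in> vanishing_coeffs n X \<and> is_leading_mono (g \<nu>) \<nu>"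
    by metis
  define w where "w = case_sum f g"
  have w: "w i \<in> coeff_space n" if "i \<in> X <+> U" for i
    using that f g by (auto simp: w_def vanishing_coeffs_def)
  assume "\<not> card X + card U \<le> N_dim n"
  then have "card (monomials n) < card (X <+> U)"
    using assms(1) by (simp add: card_monomials card_Plus U_def)
  then obtain a where a: "\<exists>i\<in>X <+> U. a i \<noteq> 0"
    and rel: "\<forall>\<mu>\<in>monomials n. (\<Sum>i\<in>X <+> U. a i * w i \<mu>) = 0"
    using nontrivial_relation_if_card_less[of "monomials n" "X <+> U" w] fin by auto
  have rel_all: "(\<Sum>i\<in>X <+> U. a i * w i \<mu>) = 0" for \<mu>
  proof (cases "\<mu> \<in> monomials n")
    case False
    have "w i \<mu> = 0" if "i \<in> X <+> U" for i
      using w[OF that] False by (rule coeff_spaceD)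
    then show ?thesis
      by (intro sum.neutral) simp
  qed (use rel in blast)
  \<comment> \<open>Evaluating the relation at a node A kills all terms but that of the fundamental polynomial of A.\<close>
  have aX: "a (Inl A) = 0" if A: "A \<in> X" for A
  proof -
    have off_diag: "poly_eval n (f B) A = 0" if B: "B \<in> X - {A}" for B
    proof -
      have "A \<in> X - {B}"
        using A B by blast
      then show ?thesis
        using f[of B] B by blast
    qed
    have "a (Inl A) = (\<Sum>B\<in>X. a (Inl B) * poly_eval n (f B) A)"
      using assms(1) f A off_diag by (simp add: sum.remove)
    also have "\<dots> = (\<Sum>i\<in>X <+> U. a i * poly_eval n (w i) A)"
      using assms(1) finU g A by (simp add: sum.Plus w_def vanishing_coeffs_def)
    also have "\<dots> = poly_eval n (\<lambda>\<mu>. \<Sum>i\<in>X <+> U. a i * w i \<mu>) A"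
      by (rule poly_eval_lincomb[symmetric])
    also have "\<dots> = 0"
      using rel_all by (simp add: poly_eval_def split_def)
    finally show ?thesis .
  qed
  have "(\<Sum>\<nu>\<in>U. a (Inr \<nu>) * g \<nu> \<mu>) = 0" for \<mu>
    using rel_all[of \<mu>] assms(1) finU aX by (simp add: sum.Plus w_def)
  moreover have "\<And>\<nu>. \<nu> \<in> U \<Longrightarrow> is_leading_mono (g \<nu>) (id \<nu>)"
    using g by simp
  ultimately have "\<forall>\<nu>\<in>U. a (Inr \<nu>) = 0"
    by (rule leading_monos_independent[OF finU inj_on_id, rotated])
  with a aX show False
    by auto
qed

section \<open>Counting shifted monomials\<close>

lemma inj_on_fst_if_mono_deg_eq:
  assumes "\<And>\<mu>. \<mu> \<in> S \<Longrightarrow> mono_deg \<mu> = d"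
  shows "inj_on fst S"
proof (rule inj_onI)
  fix \<mu> \<nu> assume "\<mu> \<in> S" "\<nu> \<in> S" "fst \<mu> = fst \<nu>"
  with assms show "\<mu> = \<nu>"
    by (metis add_left_cancel mono_deg_def prod.collapse)
qed

lemma card_add_atMost_ge:
  fixes A :: "nat set"
  assumes "finite A" and "A \<noteq> {}"
  shows "card A + j \<le> card {a + i |a i. a \<in> A \<and> i \<le> j}"
proof -
  let ?B = "{a + i |a i. a \<in> A \<and> i \<le> j}"
  have "finite ?B"
    by (rule finite_image_set2) (use assms(1) in simp_all)
  have "Max A \<in> A"
    using assms by simp
  have sub: "A \<union> {Max A<..Max A + j} \<subseteq> ?B"
  proof
    fix x assume "x \<in> A \<union> {Max A<..Max A + j}"
    then obtain a i where "x = a + i" "a \<in> A" "i \<le> j"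
    proof
      assume "x \<in> A"
      then show ?thesis
        using that[of x 0] by simp
    next
      assume "x \<in> {Max A<..Max A + j}"
      then show ?thesis
        using that[of "Max A" "x - Max A"] \<open>Max A \<in> A\<close> by auto
    qed
    then show "x \<in> ?B"
      by blast
  qed
  have "a \<notin> {Max A<..Max A + j}" if "a \<in> A" for a
    using Max_ge[OF assms(1) that] by simp
  then have "card (A \<union> {Max A<..Max A + j}) = card A + j"
    using assms(1) by (subst card_Un_disjoint) auto
  moreover have "card (A \<union> {Max A<..Max A + j}) \<le> card ?B"
    using \<open>finite ?B\<close> sub by (rule card_mono)
  ultimately show ?thesis
    by simp
qed

lemma card_add_level_ge:
  assumes "finite T" and "T \<noteq> {}" and "\<And>\<nu>. \<nu> \<in> T \<Longrightarrow> mono_deg \<nu> = k"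
  shows "card T + j \<le> card {\<nu> + \<delta> |\<nu> \<delta>. \<nu> \<in> T \<and> mono_deg \<delta> = j}"
proof -
  let ?L = "{\<nu> + \<delta> |\<nu> \<delta>. \<nu> \<in> T \<and> mono_deg \<delta> = j}"
  have inj_T: "inj_on fst T"
    using assms(3) by (rule inj_on_fst_if_mono_deg_eq)
  have inj_L: "inj_on fst ?L"
    using assms(3) by (intro inj_on_fst_if_mono_deg_eq[where d = "k + j"]) (auto simp: mono_deg_def)
  have fst_L: "fst ` ?L = {a + i |a i. a \<in> fst ` T \<and> i \<le> j}"
  proof
    show "fst ` ?L \<subseteq> {a + i |a i. a \<in> fst ` T \<and> i \<le> j}"
      by (force simp: mono_deg_def)
    show "{a + i |a i. a \<in> fst ` T \<and> i \<le> j} \<subseteq> fst ` ?L"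
    proof clarify
      fix \<nu> i assume "\<nu> \<in> T" "i \<le> j"
      then have "mono_deg (i, j - i) = j"
        by (simp add: mono_deg_def)
      with \<open>\<nu> \<in> T\<close> have "\<nu> + (i, j - i) \<in> ?L"
        by blast
      then show "fst \<nu> + i \<in> fst ` ?L"
        by (rule rev_image_eqI) simp
    qed
  qed
  have "card T + j = card (fst ` T) + j"
    by (simp add: card_image[OF inj_T])
  also have "\<dots> \<le> card {a + i |a i. a \<in> fst ` T \<and> i \<le> j}"
    using assms(1,2) by (intro card_add_atMost_ge) auto
  also have "\<dots> = card (fst ` ?L)"
    by (simp only: fst_L)
  also have "\<dots> = card ?L"
    by (rule card_image[OF inj_L])
  finally show ?thesis .
qed

lemma card_shifted_monomials_ge:
  assumes "finite S" and "finite T" and "T \<noteq> {}"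
    and "\<And>\<nu>. \<nu> \<in> S \<Longrightarrow> mono_deg \<nu> < k" and "\<And>\<nu>. \<nu> \<in> T \<Longrightarrow> mono_deg \<nu> = k"
  shows "card S + (\<Sum>j\<le>m. card T + j) \<le> card (S \<union> {\<nu> + \<delta> |\<nu> \<delta>. \<nu> \<in> T \<and> \<delta> \<in> monomials m})"
proof -
  define L where "L j = {\<nu> + \<delta> |\<nu> \<delta>. \<nu> \<in> T \<and> mono_deg \<delta> = j}" for j
  define Sh where "Sh = {\<nu> + \<delta> |\<nu> \<delta>. \<nu> \<in> T \<and> \<delta> \<in> monomials m}"
  have deg_L: "mono_deg \<mu> = k + j" if "\<mu> \<in> L j" for \<mu> j
    using that assms(5) by (auto simp: L_def mono_deg_def)
  have "finite Sh"
    unfolding Sh_def by (rule finite_image_set2) (use assms(2) in simp_all)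
  have L_Sh: "L j \<subseteq> Sh" if "j \<le> m" for j
    using that by (auto simp: L_def Sh_def monomials_def)
  have "(\<Sum>j\<le>m. card T + j) \<le> (\<Sum>j\<le>m. card (L j))"
    unfolding L_def using assms(2,3,5) by (intro sum_mono card_add_level_ge)
  also have "card S + (\<Sum>j\<le>m. card (L j)) = card (S \<union> (\<Union>j\<le>m. L j))"
  proof -
    have "finite (L j)" if "j \<le> m" for j
      using L_Sh[OF that] \<open>finite Sh\<close> by (rule finite_subset)
    moreover have "S \<inter> (\<Union>j\<le>m. L j) = {}"
      using assms(4) deg_L by fastforce
    moreover have "L i \<inter> L j = {}" if "i \<noteq> j" for i j
    proof -
      have "\<mu> \<notin> L j" if "\<mu> \<in> L i" for \<mu>
        using deg_L[OF that] deg_L[of \<mu> j] \<open>i \<noteq> j\<close> by auto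
      then show ?thesis
        by blast
    qed
    ultimately show ?thesis
      using assms(1) by (simp add: card_Un_disjoint card_UN_disjoint)
  qed
  also have "\<dots> \<le> card (S \<union> Sh)"
    using L_Sh assms(1) \<open>finite Sh\<close> by (intro card_mono) auto
  finally show ?thesis
    by (simp add: Sh_def)
qed

lemma two_N_dim: "2 * N_dim x = (x + 1) * (x + 2)"
proof -
  have "even ((x + 1) * (x + 2))"
    by auto
  then show ?thesis
    by (simp add: N_dim_def)
qed

lemma N_dim_mono: "M \<le> N \<Longrightarrow> N_dim M \<le> N_dim N"
  unfolding N_dim_def by (intro div_le_mono mult_le_mono) auto

lemma N_dim_less_shifted_count:
  assumes "s \<le> 2" and "7 \<le> s + t" and "1 \<le> m"
  shows "N_dim (m + 3) < s + (\<Sum>j\<le>m. t + j) + 3"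
proof -
  have sum: "2 * (\<Sum>j\<le>m. t + j) = 2 * (m + 1) * t + m * (m + 1)"
    by (induction m) (auto simp: algebra_simps)
  have dim: "2 * N_dim (m + 3) = (m + 4) * (m + 5)"
    using two_N_dim[of "m + 3"] by (simp add: algebra_simps)
  have prod: "(m + 1) * (7 - s) \<le> (m + 1) * t"
    using assms(2) by (intro mult_le_mono2) simp
  from assms(1) consider "s = 0" | "s = 1" | "s = 2"
    by linarith
  then show ?thesis
    using prod sum dim assms(3) by cases (simp_all add: algebra_simps)
qed

lemma card_leading_monos_vanishing_add_ge:
  assumes "{\<nu> \<in> leading_monos (vanishing_coeffs k X). mono_deg \<nu> = k} \<noteq> {}"
  shows "card {\<nu> \<in> leading_monos (vanishing_coeffs k X). mono_deg \<nu> < k}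
      + (\<Sum>j\<le>m. card {\<nu> \<in> leading_monos (vanishing_coeffs k X). mono_deg \<nu> = k} + j)
    \<le> card (leading_monos (vanishing_coeffs (k + m) X))"
proof -
  define low where "low = {\<nu> \<in> leading_monos (vanishing_coeffs k X). mono_deg \<nu> < k}"
  define top where "top = {\<nu> \<in> leading_monos (vanishing_coeffs k X). mono_deg \<nu> = k}"
  have "card low + (\<Sum>j\<le>m. card top + j)
      \<le> card (low \<union> {\<nu> + \<delta> |\<nu> \<delta>. \<nu> \<in> top \<and> \<delta> \<in> monomials m})"
    using assms by (intro card_shifted_monomials_ge[where k = k]) (auto simp: low_def top_def)
  also have "\<dots> \<le> card (leading_monos (vanishing_coeffs (k + m) X))"
  proof (rule card_mono)
    have "\<nu> + 0 \<in> leading_monos (vanishing_coeffs (k + m) X)" if "\<nu> \<in> low" for \<nu>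
      using that by (intro leading_monos_vanishing_shift) (auto simp: low_def monomials_def mono_deg_def)
    then show "low \<union> {\<nu> + \<delta> |\<nu> \<delta>. \<nu> \<in> top \<and> \<delta> \<in> monomials m}
        \<subseteq> leading_monos (vanishing_coeffs (k + m) X)"
      using leading_monos_vanishing_shift by (auto simp: top_def)
  qed simp
  finally show ?thesis
    by (simp add: low_def top_def)
qed

theorem mainTheorem8:
  fixes n k :: nat and X :: "(real \<times> real) set"
  assumes "4 \<le> k" and "k \<le> n - 1"
    and "finite X" and "card X = d_fun n (k - 3) + 3"
    and "n_independent n X"
    and "has_indep_vanishing 7 k X"
  shows "has_indep_vanishing 3 (k - 1) X"
proof -
  define m where "m = n - k"
  have m: "1 \<le> m" "n = k + m" "n - (k - 3) = m + 3"
    using assms(1,2) by (auto simp: m_def)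
  define L where "L = leading_monos (vanishing_coeffs k X)"
  define low where "low = {\<nu> \<in> L. mono_deg \<nu> < k}"
  define top where "top = {\<nu> \<in> L. mono_deg \<nu> = k}"
  have "L = low \<union> top"
    using leading_monos_vanishing_subset[of k X] by (auto simp: L_def low_def top_def monomials_def)
  moreover have "finite low" "finite top" "low \<inter> top = {}"
    by (auto simp: L_def low_def top_def)
  ultimately have "card L = card low + card top"
    by (simp add: card_Un_disjoint)
  then have card_L: "7 \<le> card low + card top"
    using card_leading_monos_vanishing_ge[OF assms(6)] by (simp add: L_def)
  show ?thesis
  proof (cases "3 \<le> card low")
    case True
    then show ?thesis
      by (intro has_indep_vanishing_if_low_leading_monos[of low k]) (auto simp: low_def L_def)
  next
    case False
    with card_L have "top \<noteq> {}"
      by auto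
    then have "card low + (\<Sum>j\<le>m. card top + j) \<le> card (leading_monos (vanishing_coeffs n X))"
      unfolding low_def top_def L_def m(2) by (rule card_leading_monos_vanishing_add_ge)
    moreover have "card X = N_dim n - N_dim (m + 3) + 3" and "N_dim (m + 3) \<le> N_dim n"
      using assms(4) m by (simp_all add: d_fun_def N_dim_mono)
    ultimately have False
      using card_leading_monos_vanishing_le[OF assms(3,5)] False card_L m(1)
        N_dim_less_shifted_count[of "card low" "card top" m] by linarith
    then show ?thesis ..
  qed
qed

end
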